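(* Let $[\mathcal{S},\mathcal{T},\mathcal{R}]$ be a backdoor triple with $\mathcal{S},\mathcal{T},\mathcal{R}$ finite, and let $a$ be the maximum arity of the relations in $\mathcal{S}$. Then there is a branching map for the sidedoor triple $\llbracket\mathcal{S}\cup\mathcal{R},\mathcal{T}\cup\mathcal{R},r\rrbracket$ whenever $r\ge\max(2,a)$.
   Context: A partition scheme is a set $\mathcal{R}$ of binary relations over a domain $D$ that are pairwise disjoint, whose union is $D^2$, which contains equality on $D$, and which is closed under converses. A backdoor triple $[\mathcal{S},\mathcal{T},\mathcal{R}]$ consists of a partition scheme $\mathcal{R}$ and two sets $\mathcal{S},\mathcal{T}$ of relations over $D$ each definable in $\mathcal{R}$ by a quantifier-free first-order formula (with equality, without parameters). A sidedoor triple $\llbracket\mathcal{S}',\mathcal{T}',r\rrbracket$ consists of two sets of relations $\mathcal{S}',\mathcal{T}'$ over a common domain with $\mathcal{T}'\subseteq\mathcal{S}'$ and an integer $r\ge1$. For distinct variables $x_1,\dots,x_r$, let $\mathcal{S}'_r$ (resp. $\mathcal{T}'_r$) be the set of $\mathrm{CSP}(\mathcal{S}')$ (resp. $\mathrm{CSP}(\mathcal{T}')$) instances with variable set $\{x_1,\dots,x_r\}$. A branching map for $\llbracket\mathcal{S}',\mathcal{T}',r\rrbracket$ (from $\mathcal{S}'$ to $\mathcal{T}'$ with radius $r$) is a total map $\Omega\colon\mathcal{S}'_r\to2^{\mathcal{T}'_r}$ with $\mathrm{Sol}(I)=\bigcup_{I'\in\Omega(I)}\mathrm{Sol}(I')$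 for every $I\in\mathcal{S}'_r$, where $\mathrm{Sol}$ denotes the set of satisfying assignments. *)

theory Defs
  imports "HOL-Library.FuncSet"
begin

text \<open>Keeping the arity explicit makes the arity of the empty relation meaningful.\<close>
type_synonym 'a relation = "nat \<times> 'a list set"

definition arity :: "'a relation \<Rightarrow> nat" where "arity R = fst R"
definition tuples :: "'a relation \<Rightarrow> 'a list set" where "tuples R = snd R"

definition rel_over :: "'a set \<Rightarrow> 'a relation \<Rightarrow> bool" where
  "rel_over D R \<longleftrightarrow> (\<forall>t\<in>tuples R. length t = arity R \<and> set t \<subseteq> D)"

definition equality_rel :: "'a set \<Rightarrow> 'a relation" where
  "equality_rel D = (2, {[x, x] | x. x \<in> D})"

definition converse_rel :: "'a relation \<Rightarrow> 'a relation" where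
  "converse_rel R = (2, {[y, x] | x y. [x, y] \<in> tuples R})"

definition partition_scheme :: "'a set \<Rightarrow> 'a relation set \<Rightarrow> bool" where
  "partition_scheme D \<R> \<longleftrightarrow>
     (\<forall>R\<in>\<R>. rel_over D R \<and> arity R = 2) \<and>
     (\<forall>R1\<in>\<R>. \<forall>R2\<in>\<R>. R1 \<noteq> R2 \<longrightarrow> tuples R1 \<inter> tuples R2 = {}) \<and>
     (\<Union>R\<in>\<R>. tuples R) = {[x, y] | x y. x \<in> D \<and> y \<in> D} \<and>
     equality_rel D \<in> \<R> \<and>
     (\<forall>R\<in>\<R>. converse_rel R \<in> \<R>)"

text \<open>Quantifier-free first-order formulas with equality and without parameters,
  over binary relation symbols (the relations themselves), with variables x_0, x_1, ...\<close>
datatype 'r qf =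
    QTrue | QFalse
  | QEq nat nat
  | QAtom 'r nat nat
  | QNot "'r qf"
  | QAnd "'r qf" "'r qf"
  | QOr "'r qf" "'r qf"

fun qf_vars :: "'r qf \<Rightarrow> nat set" where
  "qf_vars QTrue = {}"
| "qf_vars QFalse = {}"
| "qf_vars (QEq i j) = {i, j}"
| "qf_vars (QAtom R i j) = {i, j}"
| "qf_vars (QNot \<phi>) = qf_vars \<phi>"
| "qf_vars (QAnd \<phi> \<psi>) = qf_vars \<phi> \<union> qf_vars \<psi>"
| "qf_vars (QOr \<phi> \<psi>) = qf_vars \<phi> \<union> qf_vars \<psi>"

fun qf_syms :: "'r qf \<Rightarrow> 'r set" where
  "qf_syms QTrue = {}"
| "qf_syms QFalse = {}"
| "qf_syms (QEq i j) = {}"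
| "qf_syms (QAtom R i j) = {R}"
| "qf_syms (QNot \<phi>) = qf_syms \<phi>"
| "qf_syms (QAnd \<phi> \<psi>) = qf_syms \<phi> \<union> qf_syms \<psi>"
| "qf_syms (QOr \<phi> \<psi>) = qf_syms \<phi> \<union> qf_syms \<psi>"

fun qf_sat :: "'a relation qf \<Rightarrow> 'a list \<Rightarrow> bool" where
  "qf_sat QTrue xs = True"
| "qf_sat QFalse xs = False"
| "qf_sat (QEq i j) xs = (xs ! i = xs ! j)"
| "qf_sat (QAtom R i j) xs = ([xs ! i, xs ! j] \<in> tuples R)"
| "qf_sat (QNot \<phi>) xs = (\<not> qf_sat \<phi> xs)"
| "qf_sat (QAnd \<phi> \<psi>) xs = (qf_sat \<phi> xs \<and> qf_sat \<psi> xs)"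
| "qf_sat (QOr \<phi> \<psi>) xs = (qf_sat \<phi> xs \<or> qf_sat \<psi> xs)"

definition qf_definable :: "'a set \<Rightarrow> 'a relation set \<Rightarrow> 'a relation \<Rightarrow> bool" where
  "qf_definable D \<R> S \<longleftrightarrow>
     (\<exists>\<phi>. qf_vars \<phi> \<subseteq> {..<arity S} \<and> qf_syms \<phi> \<subseteq> \<R> \<and>
          tuples S = {xs. length xs = arity S \<and> set xs \<subseteq> D \<and> qf_sat \<phi> xs})"

definition backdoor_triple ::
  "'a set \<Rightarrow> 'a relation set \<Rightarrow> 'a relation set \<Rightarrow> 'a relation set \<Rightarrow> bool" where
  "backdoor_triple D \<S> \<T> \<R> \<longleftrightarrow>
     partition_scheme D \<R> \<and> (\<forall>S\<in>\<S>. qf_definable D \<R> S) \<and> (\<forall>T\<in>\<T>. qf_definable D \<R> T)"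

text \<open>CSP instances over the variable set {x_0,...,x_(r-1)} (variables are naturals < r):
  finite sets of constraints (R, scope) with R in the constraint language.\<close>
type_synonym 'a csp_instance = "('a relation \<times> nat list) set"

definition instances_r :: "'a relation set \<Rightarrow> nat \<Rightarrow> 'a csp_instance set" where
  "instances_r \<Gamma> r = {I. finite I \<and>
      (\<forall>(R, vs)\<in>I. R \<in> \<Gamma> \<and> length vs = arity R \<and> set vs \<subseteq> {..<r})}"

definition Sol :: "'a set \<Rightarrow> nat \<Rightarrow> 'a csp_instance \<Rightarrow> (nat \<Rightarrow> 'a) set" where
  "Sol D r I = {f \<in> {..<r} \<rightarrow>\<^sub>E D. \<forall>(R, vs)\<in>I. map f vs \<in> tuples R}"

definition branching_map ::
  "'a set \<Rightarrow> 'a relation set \<Rightarrow> 'a relation set \<Rightarrow> nat \<Rightarrow> ('a csp_instance \<Rightarrow> 'a csp_instance set) \<Rightarrow> bool" where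
  "branching_map D \<S>' \<T>' r \<Omega> \<longleftrightarrow>
     (\<forall>I\<in>instances_r \<S>' r. \<Omega> I \<subseteq> instances_r \<T>' r \<and>
        Sol D r I = (\<Union>I'\<in>\<Omega> I. Sol D r I'))"

end

theory Submission
  imports Defs
begin

text \<open>Since the relations of a partition scheme \<open>\<R>\<close> partition \<open>D\<^sup>2\<close> and contain equality,
  the truth of a quantifier-free formula over \<open>\<R>\<close> at a tuple depends only on which relation of
  \<open>\<R>\<close> each pair of its entries lies in. Hence a solution \<open>f\<close> of an instance \<open>I\<close> over
  \<open>\<S> \<union> \<R>\<close> can be replaced by its \<open>\<R>\<close>-type, the instance of all binary \<open>\<R>\<close>-constraints that
  \<open>f\<close> satisfies: every solution of the type induces the same pairwise relations as \<open>f\<close> and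
  therefore solves \<open>I\<close>. Branching over the types of all solutions of \<open>I\<close> gives the map.
  A branching map need not be computable.\<close>

lemma partition_scheme_arity: "partition_scheme D \<R> \<Longrightarrow> R \<in> \<R> \<Longrightarrow> arity R = 2"
  by (simp add: partition_scheme_def)

lemma partition_scheme_rel_over: "partition_scheme D \<R> \<Longrightarrow> R \<in> \<R> \<Longrightarrow> rel_over D R"
  by (simp add: partition_scheme_def)

lemma partition_scheme_equality_rel: "partition_scheme D \<R> \<Longrightarrow> equality_rel D \<in> \<R>"
  by (simp add: partition_scheme_def)

lemma partition_scheme_cover:
  assumes "partition_scheme D \<R>" and "x \<in> D" and "y \<in> D"
  obtains R where "R \<in> \<R>" and "[x, y] \<in> tuples R"
proof -
  have "[x, y] \<in> (\<Union>R\<in>\<R>. tuples R)"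
    using assms unfolding partition_scheme_def by simp
  then show ?thesis using that by blast
qed

lemma partition_scheme_unique:
  assumes "partition_scheme D \<R>" and "R1 \<in> \<R>" and "R2 \<in> \<R>"
    and "t \<in> tuples R1" and "t \<in> tuples R2"
  shows "R1 = R2"
proof (rule ccontr)
  assume "R1 \<noteq> R2"
  then have "tuples R1 \<inter> tuples R2 = {}"
    using assms(1-3) unfolding partition_scheme_def by simp
  then show False using assms(4,5) by blast
qed

lemma tuples_equality_rel_iff: "x \<in> D \<Longrightarrow> [x, y] \<in> tuples (equality_rel D) \<longleftrightarrow> x = y"
  by (auto simp: equality_rel_def tuples_def)

lemma qf_sat_cong:
  assumes "equality_rel D \<in> \<R>" and "set xs \<subseteq> D" and "set ys \<subseteq> D"
    and "length xs = length ys"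
    and same_rels: "\<And>i j R. i < length xs \<Longrightarrow> j < length xs \<Longrightarrow> R \<in> \<R> \<Longrightarrow>
          [xs ! i, xs ! j] \<in> tuples R \<longleftrightarrow> [ys ! i, ys ! j] \<in> tuples R"
  shows "qf_vars \<phi> \<subseteq> {..<length xs} \<Longrightarrow> qf_syms \<phi> \<subseteq> \<R> \<Longrightarrow> qf_sat \<phi> xs = qf_sat \<phi> ys"
proof (induction \<phi>)
  case (QEq i j)
  then have ij: "i < length xs" "j < length xs" by auto
  then have "xs ! i \<in> D" "ys ! i \<in> D"
    using assms(2-4) nth_mem by (metis subsetD)+
  then show ?case
    using same_rels[OF ij assms(1)] tuples_equality_rel_iff by (metis qf_sat.simps(3))
next
  case (QAtom R i j)
  then show ?case using same_rels by auto
qed auto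

lemma partition_scheme_qf_definable:
  assumes "partition_scheme D \<R>" and "R \<in> \<R>"
  shows "qf_definable D \<R> R"
proof -
  have "rel_over D R" and arity: "arity R = 2"
    using partition_scheme_rel_over partition_scheme_arity assms by blast+
  then have "tuples R = {xs. length xs = arity R \<and> set xs \<subseteq> D \<and> qf_sat (QAtom R 0 1) xs}"
    unfolding rel_over_def by (auto simp: numeral_2_eq_2 length_Suc_conv)
  then show ?thesis
    using arity assms(2) unfolding qf_definable_def
    by (intro exI[of _ "QAtom R 0 1"]) auto
qed

definition atomic_type :: "'a relation set \<Rightarrow> nat \<Rightarrow> (nat \<Rightarrow> 'a) \<Rightarrow> 'a csp_instance" where
  "atomic_type \<R> r f = {(R, [i, j]) | R i j. R \<in> \<R> \<and> i < r \<and> j < r \<and> [f i, f j] \<in> tuples R}"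

lemma atomic_type_in_instances_r:
  assumes "finite \<R>" and "\<forall>R\<in>\<R>. arity R = 2"
  shows "atomic_type \<R> r f \<in> instances_r \<R> r"
proof -
  have "atomic_type \<R> r f \<subseteq> \<R> \<times> (\<lambda>(i, j). [i, j]) ` ({..<r} \<times> {..<r})"
    unfolding atomic_type_def by auto
  then have "finite (atomic_type \<R> r f)"
    by (rule finite_subset) (use assms(1) in auto)
  then show ?thesis
    using assms(2) unfolding instances_r_def atomic_type_def by auto
qed

lemma instances_r_mono: "\<Gamma> \<subseteq> \<Delta> \<Longrightarrow> instances_r \<Gamma> r \<subseteq> instances_r \<Delta> r"
  unfolding instances_r_def by blast

lemma Sol_atomic_type_self:
  assumes "f \<in> {..<r} \<rightarrow>\<^sub>E D"
  shows "f \<in> Sol D r (atomic_type \<R> r f)"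
proof -
  have "map f vs \<in> tuples R" if "(R, vs) \<in> atomic_type \<R> r f" for R vs
    using that unfolding atomic_type_def by auto
  then show ?thesis using assms unfolding Sol_def by auto
qed

lemma Sol_atomic_type_same_rels:
  assumes "partition_scheme D \<R>" and "f \<in> {..<r} \<rightarrow>\<^sub>E D" and "g \<in> Sol D r (atomic_type \<R> r f)"
    and "x < r" and "y < r" and "R \<in> \<R>"
  shows "[f x, f y] \<in> tuples R \<longleftrightarrow> [g x, g y] \<in> tuples R"
proof -
  have transfer: "[g x, g y] \<in> tuples R'" if "R' \<in> \<R>" "[f x, f y] \<in> tuples R'" for R'
  proof -
    have "(R', [x, y]) \<in> atomic_type \<R> r f"
      using that assms(4,5) unfolding atomic_type_def by blast
    then show ?thesis using assms(3) unfolding Sol_def by fastforce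
  qed
  obtain R' where R': "R' \<in> \<R>" "[f x, f y] \<in> tuples R'"
    using partition_scheme_cover[OF assms(1)] assms(2,4,5) by blast
  show ?thesis
    using transfer[OF R'] transfer[OF assms(6)] R' assms(6)
      partition_scheme_unique[OF assms(1) R'(1) assms(6)] by blast
qed

lemma Sol_atomic_type_qf_definable:
  assumes "partition_scheme D \<R>" and "qf_definable D \<R> S"
    and "f \<in> {..<r} \<rightarrow>\<^sub>E D" and "g \<in> Sol D r (atomic_type \<R> r f)"
    and "length vs = arity S" and "set vs \<subseteq> {..<r}"
  shows "map f vs \<in> tuples S \<longleftrightarrow> map g vs \<in> tuples S"
proof -
  obtain \<phi> where \<phi>: "qf_vars \<phi> \<subseteq> {..<arity S}" "qf_syms \<phi> \<subseteq> \<R>"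
    "tuples S = {xs. length xs = arity S \<and> set xs \<subseteq> D \<and> qf_sat \<phi> xs}"
    using assms(2) unfolding qf_definable_def by blast
  have "g \<in> {..<r} \<rightarrow>\<^sub>E D" using assms(4) unfolding Sol_def by blast
  then have in_D: "set (map f vs) \<subseteq> D" "set (map g vs) \<subseteq> D"
    using assms(3,6) by auto
  have "qf_sat \<phi> (map f vs) = qf_sat \<phi> (map g vs)"
  proof (rule qf_sat_cong[OF _ in_D])
    show "equality_rel D \<in> \<R>" using partition_scheme_equality_rel[OF assms(1)] .
    show "qf_vars \<phi> \<subseteq> {..<length (map f vs)}" using \<phi>(1) assms(5) by simp
    fix i j R assume "i < length (map f vs)" "j < length (map f vs)" "R \<in> \<R>"
    moreover from this have "vs ! i < r" "vs ! j < r" using assms(6) nth_mem by auto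
    ultimately show "[map f vs ! i, map f vs ! j] \<in> tuples R \<longleftrightarrow> [map g vs ! i, map g vs ! j] \<in> tuples R"
      using Sol_atomic_type_same_rels[OF assms(1,3,4)] by simp
  qed (use \<phi>(2) in simp_all)
  then show ?thesis using \<phi>(3) in_D assms(5) by simp
qed

lemma Sol_atomic_type_subset_Sol:
  assumes "partition_scheme D \<R>" and "\<forall>S\<in>\<Gamma>. qf_definable D \<R> S"
    and "I \<in> instances_r \<Gamma> r" and "f \<in> Sol D r I"
  shows "Sol D r (atomic_type \<R> r f) \<subseteq> Sol D r I"
proof
  fix g assume g: "g \<in> Sol D r (atomic_type \<R> r f)"
  have f: "f \<in> {..<r} \<rightarrow>\<^sub>E D" "\<forall>(S, vs)\<in>I. map f vs \<in> tuples S"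
    using assms(4) unfolding Sol_def by auto
  have "map g vs \<in> tuples S" if "(S, vs) \<in> I" for S vs
  proof -
    have "S \<in> \<Gamma>" "length vs = arity S" "set vs \<subseteq> {..<r}"
      using that assms(3) unfolding instances_r_def by auto
    then show ?thesis
      using that f assms(2) Sol_atomic_type_qf_definable[OF assms(1) _ f(1) g] by blast
  qed
  then show "g \<in> Sol D r I" using g unfolding Sol_def by blast
qed

lemma branching_map_atomic_type:
  assumes "partition_scheme D \<R>" and "finite \<R>" and "\<forall>S\<in>\<Gamma>. qf_definable D \<R> S"
    and "\<R> \<subseteq> \<Delta>"
  shows "branching_map D \<Gamma> \<Delta> r (\<lambda>I. atomic_type \<R> r ` Sol D r I)"
  unfolding branching_map_def
proof (intro ballI conjI)
  fix I assume I: "I \<in> instances_r \<Gamma> r"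
  have "\<forall>R\<in>\<R>. arity R = 2" using partition_scheme_arity[OF assms(1)] by blast
  from atomic_type_in_instances_r[OF assms(2) this]
  show "atomic_type \<R> r ` Sol D r I \<subseteq> instances_r \<Delta> r"
    using instances_r_mono[OF assms(4)] by blast
  show "Sol D r I = (\<Union>J\<in>atomic_type \<R> r ` Sol D r I. Sol D r J)"
  proof
    show "Sol D r I \<subseteq> (\<Union>J\<in>atomic_type \<R> r ` Sol D r I. Sol D r J)"
    proof
      fix f assume "f \<in> Sol D r I"
      moreover from this have "f \<in> {..<r} \<rightarrow>\<^sub>E D" unfolding Sol_def by blast
      ultimately show "f \<in> (\<Union>J\<in>atomic_type \<R> r ` Sol D r I. Sol D r J)"
        using Sol_atomic_type_self by blast
    qed
    show "(\<Union>J\<in>atomic_type \<R> r ` Sol D r I. Sol D r J) \<subseteq> Sol D r I"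
      using Sol_atomic_type_subset_Sol[OF assms(1,3) I] by blast
  qed
qed

theorem mainTheorem12:
  fixes D :: "'a set" and \<S> \<T> \<R> :: "'a relation set" and r :: nat
  assumes "backdoor_triple D \<S> \<T> \<R>"
    and "finite \<S>" and "finite \<T>" and "finite \<R>"
    and "r \<ge> 2" and "\<forall>S\<in>\<S>. arity S \<le> r"
  shows "\<exists>\<Omega>. branching_map D (\<S> \<union> \<R>) (\<T> \<union> \<R>) r \<Omega>"
proof -
  have partition: "partition_scheme D \<R>" and "\<forall>S\<in>\<S>. qf_definable D \<R> S"
    using assms(1) unfolding backdoor_triple_def by auto
  then have "\<forall>S\<in>\<S> \<union> \<R>. qf_definable D \<R> S"
    using partition_scheme_qf_definable by blast
  then show ?thesis
    using branching_map_atomic_type[OF partition assms(4)] by blast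
qed

end
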